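(* Let $\alpha>0$ and $N\ge2$. If $\mu,\nu$ are probability measures on $\Omega_N$ such that $\mu\in\mathcal{S}$ and $\mu$ is stochastically dominated by $\nu$ (i.e. $\mu(f)\le\nu(f)$ for every increasing $f$), then $$\|\mu-\pi_{N,\alpha}\|_{TV}\le\|\nu-\pi_{N,\alpha}\|_{TV}.$$
   Context: $\Omega_N=\{x\in\mathbb{R}^{N-1}:0\le x_1\le\dots\le x_{N-1}\le N\}$, $x_0=0,x_N=N$; increasing means w.r.t. coordinatewise order. For $k\in\{1,\dots,N\}$, $\Omega_{k,N}=\{x\in\Omega_N:x_k=N\}$ (so $\Omega_{1,N}=\{(N,\dots,N)\}$, $\Omega_{N,N}=\Omega_N$). $\pi_{k,\alpha}$ is the law of $(x_1,\dots,x_{N-1})$ with $x_j=\sum_{i\le j}\eta_i$, where $\eta_1,\dots,\eta_k$ are i.i.d. Gamma with shape $\alpha$ (any rate) conditioned on $\sum_{i=1}^k\eta_i=N$, and $\eta_{k+1}=\dots=\eta_N=0$; $\pi_{N,\alpha}$ is the case $k=N$ (density proportional to $\prod_{i=1}^N(x_i-x_{i-1})^{\alpha-1}$). $\mathcal{S}_k$ is the set of probability measures supported on $\Omega_{k,N}$, absolutely continuous w.r.t. $\pi_{k,\alpha}$ with increasing density. $\mathcal{S}$ is the set of probability measures $\mu=\sum_{k=1}^N\gamma_k\mu_k$ with $\mu_k\in\mathcal{S}_k$, $\gamma_k\ge0$, $\sum\gamma_k=1$. *)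

theory Defs
  imports "HOL-Probability.Probability"
begin

text \<open>Points of \<Omega>_N are vectors (x_1,...,x_{N-1}) represented as extensional functions
  on the index set {1..N-1}; the ambient measurable space is the product of Borel
  lines over {1..N-1}.\<close>

definition OmegaM :: "nat \<Rightarrow> (nat \<Rightarrow> real) measure" where
  "OmegaM N = PiM {1..N-1} (\<lambda>_. lborel)"

definition xc :: "nat \<Rightarrow> (nat \<Rightarrow> real) \<Rightarrow> nat \<Rightarrow> real" where
  "xc N x j = (if j = 0 then 0 else if j = N then real N else x j)"

definition Omega :: "nat \<Rightarrow> (nat \<Rightarrow> real) set" where
  "Omega N = {x \<in> space (OmegaM N). \<forall>j<N. xc N x j \<le> xc N x (Suc j)}"

definition Omega_k :: "nat \<Rightarrow> nat \<Rightarrow> (nat \<Rightarrow> real) set" where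
  "Omega_k N k = {x \<in> Omega N. xc N x k = real N}"

definition cle :: "nat \<Rightarrow> (nat \<Rightarrow> real) \<Rightarrow> (nat \<Rightarrow> real) \<Rightarrow> bool" where
  "cle N x y \<longleftrightarrow> (\<forall>i\<in>{1..N-1}. x i \<le> y i)"

definition increasing_on :: "nat \<Rightarrow> (nat \<Rightarrow> real) set \<Rightarrow> ((nat \<Rightarrow> real) \<Rightarrow> real) \<Rightarrow> bool" where
  "increasing_on N A f \<longleftrightarrow> (\<forall>x\<in>A. \<forall>y\<in>A. cle N x y \<longrightarrow> f x \<le> f y)"

text \<open>Unnormalised Dirichlet density of (x_1,...,x_{k-1}), with x_0 = 0, x_k = N:
  the indicator of 0 \<le> x_1 \<le> ... \<le> x_{k-1} \<le> N times \<Prod>_{i=1}^k (x_i - x_{i-1})^(\<alpha>-1).\<close>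
definition dir_dens :: "nat \<Rightarrow> real \<Rightarrow> nat \<Rightarrow> (nat \<Rightarrow> real) \<Rightarrow> real" where
  "dir_dens N \<alpha> k y =
     (let z = (\<lambda>j. if j = 0 then 0 else if j = k then real N else y j) in
      if (\<forall>j<k. z j \<le> z (Suc j))
      then (\<Prod>i\<in>{1..k}. (z i - z (i - 1)) powr (\<alpha> - 1))
      else 0)"

definition embed_k :: "nat \<Rightarrow> nat \<Rightarrow> (nat \<Rightarrow> real) \<Rightarrow> (nat \<Rightarrow> real)" where
  "embed_k N k y = (\<lambda>j\<in>{1..N-1}. if j < k then y j else real N)"

text \<open>\<pi>_{k,\<alpha>}: law of the partial sums of k i.i.d. Gamma(\<alpha>) variables conditioned on
  their sum being N (a scaled Dirichlet(\<alpha>,...,\<alpha>) law), padded with zero increments.\<close>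
definition pi_k :: "nat \<Rightarrow> real \<Rightarrow> nat \<Rightarrow> (nat \<Rightarrow> real) measure" where
  "pi_k N \<alpha> k =
     (let L = PiM {1..k-1} (\<lambda>_. lborel);
          Z = (\<integral>\<^sup>+ y. ennreal (dir_dens N \<alpha> k y) \<partial>L) in
      distr (density L (\<lambda>y. ennreal (dir_dens N \<alpha> k y) / Z)) (OmegaM N) (embed_k N k))"

definition S_k :: "nat \<Rightarrow> real \<Rightarrow> nat \<Rightarrow> (nat \<Rightarrow> real) measure set" where
  "S_k N \<alpha> k = {\<mu>. prob_space \<mu> \<and> sets \<mu> = sets (OmegaM N) \<and> emeasure \<mu> (Omega_k N k) = 1 \<and>
     (\<exists>h. h \<in> borel_measurable (OmegaM N) \<and> (\<forall>x. 0 \<le> h x) \<and>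
          increasing_on N (Omega_k N k) h \<and>
          \<mu> = density (pi_k N \<alpha> k) (\<lambda>x. ennreal (h x)))}"

definition S_set :: "nat \<Rightarrow> real \<Rightarrow> (nat \<Rightarrow> real) measure set" where
  "S_set N \<alpha> = {\<mu>. prob_space \<mu> \<and> sets \<mu> = sets (OmegaM N) \<and>
     (\<exists>\<gamma> \<mu>s. (\<forall>k\<in>{1..N}. 0 \<le> \<gamma> k \<and> \<mu>s k \<in> S_k N \<alpha> k) \<and> (\<Sum>k\<in>{1..N}. \<gamma> k) = (1::real) \<and>
        (\<forall>A\<in>sets (OmegaM N). emeasure \<mu> A = (\<Sum>k\<in>{1..N}. ennreal (\<gamma> k) * emeasure (\<mu>s k) A)))}"

definition prob_on_Omega :: "nat \<Rightarrow> (nat \<Rightarrow> real) measure \<Rightarrow> bool" where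
  "prob_on_Omega N \<mu> \<longleftrightarrow> prob_space \<mu> \<and> sets \<mu> = sets (OmegaM N) \<and> emeasure \<mu> (Omega N) = 1"

definition stoch_dom :: "nat \<Rightarrow> (nat \<Rightarrow> real) measure \<Rightarrow> (nat \<Rightarrow> real) measure \<Rightarrow> bool" where
  "stoch_dom N \<mu> \<nu> \<longleftrightarrow>
     (\<forall>f. f \<in> borel_measurable (OmegaM N) \<longrightarrow> bounded (range f) \<longrightarrow> increasing_on N (Omega N) f \<longrightarrow>
        (\<integral>x. f x \<partial>\<mu>) \<le> (\<integral>x. f x \<partial>\<nu>))"

definition tv_dist :: "'a measure \<Rightarrow> 'a measure \<Rightarrow> real" where
  "tv_dist \<mu> \<nu> = (SUP A\<in>sets \<mu>. \<bar>measure \<mu> A - measure \<nu> A\<bar>)"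

end

theory Submission
  imports Defs
begin

text \<open>Write \<pi> = \<pi>_{N,\<alpha>} and \<mu> = \<Sum>_k \<gamma>_k \<mu>_k. For k < N the measure \<mu>_k lives on
  \<Omega>_{k,N}, which lies in the face T = {x_{N-1} = N}; this face is \<pi>-null because \<pi> has a
  Lebesgue density. Off T, \<mu> therefore has the density g = \<gamma>_N h with respect to \<pi>, where h is
  the increasing density of \<mu>_N. Hence A = T \<union> {g \<ge> 1} is a Hahn positive set for \<mu> - \<pi>, so
  that \<parallel>\<mu> - \<pi>\<parallel>_TV = \<mu>(A) - \<pi>(A) (using that \<pi> has mass at most 1). Both T and the
  superlevel set of g are upward closed in \<Omega>_N, so domination gives \<mu>(A) \<le> \<nu>(A), and
  \<nu>(A) - \<pi>(A) \<le> \<parallel>\<nu> - \<pi>\<parallel>_TV.\<close>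

lemma measure_diff_le_tv_dist:
  assumes "finite_measure M" "finite_measure P" "A \<in> sets M"
  shows "measure M A - measure P A \<le> tv_dist M P"
proof -
  interpret M: finite_measure M by fact
  interpret P: finite_measure P by fact
  have "bdd_above ((\<lambda>B. \<bar>measure M B - measure P B\<bar>) ` sets M)"
  proof (rule bdd_aboveI2)
    fix B
    have "measure M B \<le> measure M (space M)" "measure P B \<le> measure P (space P)"
      "0 \<le> measure M B" "0 \<le> measure P B"
      by (rule M.bounded_measure P.bounded_measure measure_nonneg)+
    then show "\<bar>measure M B - measure P B\<bar> \<le> measure M (space M) + measure P (space P)"
      by linarith
  qed
  then have "\<bar>measure M A - measure P A\<bar> \<le> tv_dist M P"
    unfolding tv_dist_def using assms(3) by (rule cSUP_upper2) simp
  then show ?thesis by linarith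
qed

lemma measure_diff_le_positive_set:
  assumes "finite_measure M" "finite_measure P" "sets P = sets M" "A \<in> sets M" "B \<in> sets M"
    and positive: "\<And>C. C \<in> sets M \<Longrightarrow> C \<subseteq> A \<Longrightarrow> emeasure P C \<le> emeasure M C"
    and negative: "\<And>C. C \<in> sets M \<Longrightarrow> C \<inter> A = {} \<Longrightarrow> emeasure M C \<le> emeasure P C"
  shows "measure M B - measure P B \<le> measure M A - measure P A"
proof -
  interpret M: finite_measure M by fact
  interpret P: finite_measure P by fact
  have "emeasure M (B - A) \<le> emeasure P (B - A)" "emeasure P (A - B) \<le> emeasure M (A - B)"
    using assms by (auto intro!: positive negative)
  then have "measure M (B - A) \<le> measure P (B - A)" "measure P (A - B) \<le> measure M (A - B)"
    by (simp_all add: M.emeasure_eq_measure P.emeasure_eq_measure)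
  moreover have "B \<inter> A = A \<inter> B" by blast
  moreover note M.finite_measure_Diff'[of B A] P.finite_measure_Diff'[of B A]
    M.finite_measure_Diff'[of A B] P.finite_measure_Diff'[of A B]
  ultimately show ?thesis
    using assms(3-5) by simp
qed

lemma tv_dist_eq_positive_set:
  assumes "finite_measure M" "finite_measure P" "sets P = sets M" "A \<in> sets M"
    and mass: "emeasure P (space P) \<le> emeasure M (space M)"
    and positive: "\<And>C. C \<in> sets M \<Longrightarrow> C \<subseteq> A \<Longrightarrow> emeasure P C \<le> emeasure M C"
    and negative: "\<And>C. C \<in> sets M \<Longrightarrow> C \<inter> A = {} \<Longrightarrow> emeasure M C \<le> emeasure P C"
  shows "tv_dist M P = measure M A - measure P A"
  unfolding tv_dist_def
proof (rule cSup_eq_maximum)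
  interpret M: finite_measure M by fact
  interpret P: finite_measure P by fact
  note diff_le = measure_diff_le_positive_set[OF assms(1-4) _ positive negative]
  have mass: "measure P (space P) \<le> measure M (space M)"
    using mass by (simp add: M.emeasure_eq_measure P.emeasure_eq_measure)
  have "emeasure P A \<le> emeasure M A"
    using assms(4) by (rule positive) simp
  then have "measure P A \<le> measure M A"
    by (simp add: M.emeasure_eq_measure P.emeasure_eq_measure)
  then show "measure M A - measure P A \<in> (\<lambda>B. \<bar>measure M B - measure P B\<bar>) ` sets M"
    using assms(4) by (intro image_eqI[of _ _ A]) auto
  show "x \<le> measure M A - measure P A" if x_mem: "x \<in> (\<lambda>B. \<bar>measure M B - measure P B\<bar>) ` sets M" for x
  proof -
    obtain B where x: "x = \<bar>measure M B - measure P B\<bar>" and B: "B \<in> sets M"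
      using x_mem by (rule imageE)
    \<comment> \<open>The lower bound comes from the complement of B; this is where the mass assumption enters.\<close>
    have "space P = space M"
      using assms(3) by (rule sets_eq_imp_space_eq)
    moreover have "measure P (space P - B) = measure P (space P) - measure P B"
      using B assms(3) by (intro P.finite_measure_compl) simp
    ultimately have "measure P (space M - B) = measure P (space P) - measure P B"
      by simp
    moreover have "measure M (space M - B) = measure M (space M) - measure M B"
      using B by (rule M.finite_measure_compl)
    moreover have "measure M (space M - B) - measure P (space M - B) \<le> measure M A - measure P A"
      using B by (intro diff_le) auto
    ultimately show ?thesis
      using diff_le[OF B] mass unfolding x by linarith
  qed
qed

lemma emeasure_le_if_density_le_1:
  assumes density: "\<And>C. C \<in> sets P \<Longrightarrow> C \<inter> T = {} \<Longrightarrow>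
      emeasure M C = (\<integral>\<^sup>+x. ennreal (g x) * indicator C x \<partial>P)"
    and "C \<in> sets P" "C \<inter> T = {}" "\<And>x. x \<in> C \<Longrightarrow> g x \<le> 1"
  shows "emeasure M C \<le> emeasure P C"
proof -
  have "emeasure M C = (\<integral>\<^sup>+x. ennreal (g x) * indicator C x \<partial>P)"
    using assms(2,3) by (rule density)
  also have "\<dots> \<le> (\<integral>\<^sup>+x. indicator C x \<partial>P)"
    using assms(4) by (intro nn_integral_mono) (simp add: indicator_def)
  also have "\<dots> = emeasure P C"
    using assms(2) by simp
  finally show ?thesis .
qed

lemma emeasure_ge_if_density_ge_1:
  assumes "sets M = sets P" "T \<in> null_sets P"
    and density: "\<And>C. C \<in> sets P \<Longrightarrow> C \<inter> T = {} \<Longrightarrow>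
      emeasure M C = (\<integral>\<^sup>+x. ennreal (g x) * indicator C x \<partial>P)"
    and "C \<in> sets P" "\<And>x. x \<in> C - T \<Longrightarrow> 1 \<le> g x"
  shows "emeasure P C \<le> emeasure M C"
proof -
  have "C - T \<in> sets P"
    using assms(2,4) by auto
  have "emeasure P C = (\<integral>\<^sup>+x. indicator (C - T) x \<partial>P)"
    using assms(2,4) \<open>C - T \<in> sets P\<close> by (simp add: emeasure_Diff_null_set)
  also have "\<dots> \<le> (\<integral>\<^sup>+x. ennreal (g x) * indicator (C - T) x \<partial>P)"
    using assms(5) by (intro nn_integral_mono) (simp add: indicator_def)
  also have "\<dots> = emeasure M (C - T)"
    using \<open>C - T \<in> sets P\<close> by (intro density[symmetric]) auto
  also have "\<dots> \<le> emeasure M C"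
    using assms(1,4) by (intro emeasure_mono) auto
  finally show ?thesis .
qed

lemma tv_dist_eq_density_superlevel:
  assumes "finite_measure M" "finite_measure P" "sets M = sets P"
    and "emeasure P (space P) \<le> emeasure M (space M)"
    and "T \<in> null_sets P" "g \<in> borel_measurable P"
    and density: "\<And>C. C \<in> sets P \<Longrightarrow> C \<inter> T = {} \<Longrightarrow>
      emeasure M C = (\<integral>\<^sup>+x. ennreal (g x) * indicator C x \<partial>P)"
  defines "A \<equiv> T \<union> {x \<in> space P. 1 \<le> g x}"
  shows "tv_dist M P = measure M A - measure P A"
proof (rule tv_dist_eq_positive_set)
  have [measurable]: "T \<in> sets P" "g \<in> borel_measurable P"
    using assms(5,6) by auto
  show "A \<in> sets M"
    unfolding A_def assms(3) by measurable
  show "emeasure P C \<le> emeasure M C" if "C \<in> sets M" "C \<subseteq> A" for C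
    using that assms(3,5) by (intro emeasure_ge_if_density_ge_1[OF _ _ density]) (auto simp: A_def)
  show "emeasure M C \<le> emeasure P C" if C: "C \<in> sets M" "C \<inter> A = {}" for C
  proof (rule emeasure_le_if_density_le_1[OF density])
    have "C \<subseteq> space P"
      using C(1) assms(3) sets.sets_into_space[of C P] by simp
    then show "g x \<le> 1" if "x \<in> C" for x
      using C(2) that unfolding A_def by fastforce
  qed (use C assms(3) in \<open>auto simp: A_def\<close>)
qed (use assms(1-4) in auto)

lemma measurable_xc[measurable]: "(\<lambda>x. xc N x j) \<in> borel_measurable (OmegaM N)"
proof (cases "j = 0 \<or> j = N \<or> j \<in> {1..N-1}")
  case True
  then show ?thesis
    unfolding xc_def OmegaM_def by (cases "N = 0") (auto intro!: measurable_component_singleton)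
next
  case False
  then have "xc N x j = undefined" if "x \<in> space (OmegaM N)" for x
    using that unfolding xc_def OmegaM_def by (auto simp: space_PiM PiE_def extensional_def)
  then show ?thesis
    by (subst measurable_cong[where g = "\<lambda>_. undefined"]) auto
qed

lemma sets_Omega[measurable]: "Omega N \<in> sets (OmegaM N)"
proof -
  have "Omega N = {x \<in> space (OmegaM N). \<forall>j\<in>{..<N}. xc N x j \<le> xc N x (Suc j)}"
    unfolding Omega_def by auto
  also have "\<dots> \<in> sets (OmegaM N)"
    apply (rule sets.sets_Collect_countable_All')
    subgoal by measurable
    by simp
  finally show ?thesis .
qed

lemma sets_Omega_k[measurable]: "Omega_k N k \<in> sets (OmegaM N)"
proof -
  have "Omega_k N k = Omega N \<inter> {x \<in> space (OmegaM N). xc N x k = real N}"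
    unfolding Omega_k_def Omega_def by auto
  also have "\<dots> \<in> sets (OmegaM N)"
    by measurable
  finally show ?thesis .
qed

lemma xc_N[simp]: "xc N x N = real N"
  by (simp add: xc_def)

lemma Omega_xc_mono:
  assumes "x \<in> Omega N" "i \<le> j" "j \<le> N"
  shows "xc N x i \<le> xc N x j"
  using assms(2,3)
proof (induction j rule: dec_induct)
  case (step j)
  then show ?case
    using assms(1) unfolding Omega_def by (auto intro: order.trans)
qed simp

lemma Omega_k_mono:
  assumes "k \<le> m" "m \<le> N"
  shows "Omega_k N k \<subseteq> Omega_k N m"
proof
  fix x assume x: "x \<in> Omega_k N k"
  then have "real N \<le> xc N x m" "xc N x m \<le> xc N x N"
    using assms unfolding Omega_k_def by (auto dest: Omega_xc_mono)
  then show "x \<in> Omega_k N m"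
    using x unfolding Omega_k_def by simp
qed

lemma Omega_k_upward_closed:
  assumes "1 \<le> m" "m \<le> N" "x \<in> Omega_k N m" "y \<in> Omega N" "cle N x y"
  shows "y \<in> Omega_k N m"
proof (cases "m = N")
  case False
  then have "x m \<le> y m" "xc N x m = x m" "xc N y m = y m"
    using assms(1,2,5) unfolding cle_def xc_def by auto
  moreover have "xc N y m \<le> xc N y N"
    using assms(4,2) order.refl by (rule Omega_xc_mono)
  ultimately show ?thesis
    using assms(3,4) unfolding Omega_k_def by simp
qed (use assms(4) in \<open>simp add: Omega_k_def\<close>)

lemma increasing_on_indicator:
  assumes "\<And>x y. x \<in> X \<Longrightarrow> y \<in> X \<Longrightarrow> cle N x y \<Longrightarrow> x \<in> A \<Longrightarrow> y \<in> A"
  shows "increasing_on N X (indicator A)"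
  unfolding increasing_on_def
proof (intro ballI impI)
  fix x y assume "x \<in> X" "y \<in> X" "cle N x y"
  then show "indicator A x \<le> (indicator A y :: real)"
    using assms by (cases "x \<in> A") auto
qed

lemma stoch_dom_measure_le:
  assumes "stoch_dom N \<mu> \<nu>" "sets \<mu> = sets (OmegaM N)" "sets \<nu> = sets (OmegaM N)"
    and "A \<in> sets (OmegaM N)" "increasing_on N (Omega N) (indicator A)"
  shows "measure \<mu> A \<le> measure \<nu> A"
proof -
  have bounded: "bounded (range (indicator A :: _ \<Rightarrow> real))"
    by (rule bounded_subset[OF finite_imp_bounded[of "{0, 1}"]]) (auto simp: indicator_def)
  have measurable: "(indicator A :: _ \<Rightarrow> real) \<in> borel_measurable (OmegaM N)"
    using assms(4) by simp
  have "A \<inter> space \<mu> = A" "A \<inter> space \<nu> = A"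
    using assms(2-4) by (simp_all add: sets.Int_space_eq2)
  then show ?thesis
    using assms(1)[unfolded stoch_dom_def, rule_format, OF measurable bounded assms(5)] by simp
qed

lemma increasing_on_indicator_Omega_k_Un_superlevel:
  assumes "1 \<le> m" "m \<le> N" "increasing_on N (Omega N) g"
  shows "increasing_on N (Omega N) (indicator (Omega_k N m \<union> {x \<in> space (OmegaM N). c \<le> g x}))"
proof (rule increasing_on_indicator)
  fix x y assume xy: "x \<in> Omega N" "y \<in> Omega N" "cle N x y"
    and x: "x \<in> Omega_k N m \<union> {x \<in> space (OmegaM N). c \<le> g x}"
  have "y \<in> space (OmegaM N)"
    using xy(2) by (simp add: Omega_def)
  moreover have "g x \<le> g y"
    using assms(3) xy unfolding increasing_on_def by blast
  ultimately show "y \<in> Omega_k N m \<union> {x \<in> space (OmegaM N). c \<le> g x}"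
    using x Omega_k_upward_closed[OF assms(1,2) _ xy(2,3)] by auto
qed

lemma sets_pi_k[simp]: "sets (pi_k N \<alpha> k) = sets (OmegaM N)"
  unfolding pi_k_def Let_def by simp

lemma pi_k_N_eq_density:
  "pi_k N \<alpha> N = density (OmegaM N)
     (\<lambda>y. ennreal (dir_dens N \<alpha> N y) / (\<integral>\<^sup>+ y. ennreal (dir_dens N \<alpha> N y) \<partial>OmegaM N))"
proof -
  have "embed_k N N y = y" if "y \<in> space (OmegaM N)" for y
    using that unfolding embed_k_def OmegaM_def
    by (auto simp: space_PiM PiE_def extensional_def restrict_def fun_eq_iff)
  then show ?thesis
    unfolding pi_k_def Let_def OmegaM_def[symmetric]
    by (subst distr_cong[where g = "\<lambda>y. y"]) (auto simp: distr_id2)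
qed

lemma measurable_dir_dens[measurable]: "(\<lambda>y. dir_dens N \<alpha> N y) \<in> borel_measurable (OmegaM N)"
proof -
  have "dir_dens N \<alpha> N y =
      (if y \<in> Omega N then \<Prod>i\<in>{1..N}. (xc N y i - xc N y (i - 1)) powr (\<alpha> - 1) else 0)"
    if "y \<in> space (OmegaM N)" for y
    using that unfolding dir_dens_def Omega_def xc_def Let_def by simp
  moreover have "(\<lambda>y. if y \<in> Omega N then \<Prod>i\<in>{1..N}. (xc N y i - xc N y (i - 1)) powr (\<alpha> - 1) else 0)
      \<in> borel_measurable (OmegaM N)"
    by measurable
  ultimately show ?thesis
    by (subst measurable_cong) auto
qed

lemma subprob_space_pi_k_N: "subprob_space (pi_k N \<alpha> N)"
proof
  define Z where "Z = (\<integral>\<^sup>+ y. ennreal (dir_dens N \<alpha> N y) \<partial>OmegaM N)"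
  have "emeasure (pi_k N \<alpha> N) (space (pi_k N \<alpha> N)) =
      (\<integral>\<^sup>+ y. ennreal (dir_dens N \<alpha> N y) / Z \<partial>OmegaM N)"
    unfolding pi_k_N_eq_density Z_def[symmetric] by (simp add: emeasure_density)
  also have "\<dots> = Z / Z"
    unfolding Z_def by (simp add: nn_integral_divide)
  also have "\<dots> \<le> 1"
    by (cases "Z = 0"; cases "Z = \<top>") (auto simp: top.not_eq_extremum)
  finally show "emeasure (pi_k N \<alpha> N) (space (pi_k N \<alpha> N)) \<le> 1" .
  show "space (pi_k N \<alpha> N) \<noteq> {}"
    unfolding pi_k_N_eq_density by (simp add: OmegaM_def space_PiM PiE_eq_empty_iff)
qed

lemma absolutely_continuous_pi_k_N: "absolutely_continuous (OmegaM N) (pi_k N \<alpha> N)"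
  unfolding pi_k_N_eq_density by (rule absolutely_continuousI_density) simp

lemma null_sets_OmegaM_coordinate:
  assumes "j \<in> {1..N-1}"
  shows "{x \<in> space (OmegaM N). x j = c} \<in> null_sets (OmegaM N)"
proof (rule null_setsI)
  interpret product_sigma_finite "\<lambda>_. lborel :: real measure" ..
  have "{x \<in> space (OmegaM N). x j = c} = PiE {1..N-1} (\<lambda>i. if i = j then {c} else UNIV)"
    using assms unfolding OmegaM_def by (auto simp: space_PiM PiE_iff extensional_def split: if_splits)
  also have "emeasure (OmegaM N) \<dots> = (\<Prod>i\<in>{1..N-1}. emeasure lborel (if i = j then {c} else UNIV))"
    unfolding OmegaM_def by (rule emeasure_PiM) auto
  also have "\<dots> = 0"
    using assms by (intro prod_zero) (auto intro!: bexI[of _ j])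
  finally show "emeasure (OmegaM N) {x \<in> space (OmegaM N). x j = c} = 0" .
  show "{x \<in> space (OmegaM N). x j = c} \<in> sets (OmegaM N)"
    using assms unfolding OmegaM_def by measurable
qed

lemma null_sets_pi_k_N_Omega_k:
  assumes "2 \<le> N"
  shows "Omega_k N (N - 1) \<in> null_sets (pi_k N \<alpha> N)"
proof (rule null_sets_subset)
  show "Omega_k N (N - 1) \<subseteq> {x \<in> space (OmegaM N). x (N - 1) = real N}"
    using assms by (auto simp: Omega_k_def Omega_def xc_def)
  show "{x \<in> space (OmegaM N). x (N - 1) = real N} \<in> null_sets (pi_k N \<alpha> N)"
    using absolutely_continuous_pi_k_N null_sets_OmegaM_coordinate assms
    unfolding absolutely_continuous_def by fastforce
qed simp

lemma S_k_emeasure_eq_0: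
  assumes "\<mu> \<in> S_k N \<alpha> k" "C \<in> sets (OmegaM N)" "C \<inter> Omega_k N k = {}"
  shows "emeasure \<mu> C = 0"
proof -
  have \<mu>: "prob_space \<mu>" "sets \<mu> = sets (OmegaM N)" "emeasure \<mu> (Omega_k N k) = 1"
    using assms(1) unfolding S_k_def by auto
  have space: "space \<mu> = space (OmegaM N)"
    using \<mu>(2) by (rule sets_eq_imp_space_eq)
  have "C \<subseteq> space \<mu> - Omega_k N k"
    using assms(2,3) sets.sets_into_space unfolding space by blast
  then have "emeasure \<mu> C \<le> emeasure \<mu> (space \<mu> - Omega_k N k)"
    using \<mu>(2) unfolding space by (intro emeasure_mono) auto
  also have "\<dots> = 0"
    using \<mu> by (simp add: emeasure_compl prob_space.emeasure_space_1)
  finally show ?thesis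
    by simp
qed

lemma S_set_density_off_Omega_k:
  assumes "2 \<le> N" "\<mu> \<in> S_set N \<alpha>"
  obtains g where "g \<in> borel_measurable (OmegaM N)" "increasing_on N (Omega N) g"
    "\<And>C. C \<in> sets (OmegaM N) \<Longrightarrow> C \<inter> Omega_k N (N - 1) = {} \<Longrightarrow>
       emeasure \<mu> C = (\<integral>\<^sup>+x. ennreal (g x) * indicator C x \<partial>pi_k N \<alpha> N)"
proof -
  obtain \<gamma> \<mu>s where \<gamma>: "\<forall>k\<in>{1..N}. 0 \<le> \<gamma> k \<and> \<mu>s k \<in> S_k N \<alpha> k"
    and mixture: "\<forall>A\<in>sets (OmegaM N).
      emeasure \<mu> A = (\<Sum>k\<in>{1..N}. ennreal (\<gamma> k) * emeasure (\<mu>s k) A)"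
    using assms(2) unfolding S_set_def by blast
  have N: "N \<in> {1..N}"
    using assms(1) by simp
  obtain h where h: "h \<in> borel_measurable (OmegaM N)" "\<forall>x. 0 \<le> h x" "increasing_on N (Omega N) h"
    and \<mu>s_N: "\<mu>s N = density (pi_k N \<alpha> N) (\<lambda>x. ennreal (h x))"
  proof -
    have "\<mu>s N \<in> S_k N \<alpha> N" "Omega_k N N = Omega N"
      using \<gamma> N by (auto simp: Omega_k_def)
    then show ?thesis
      using that unfolding S_k_def by auto
  qed
  show ?thesis
  proof
    show "(\<lambda>x. \<gamma> N * h x) \<in> borel_measurable (OmegaM N)"
      using h(1) by simp
    show "increasing_on N (Omega N) (\<lambda>x. \<gamma> N * h x)"
      using h(3) \<gamma> N unfolding increasing_on_def by (auto intro: mult_left_mono)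
    fix C assume C: "C \<in> sets (OmegaM N)" "C \<inter> Omega_k N (N - 1) = {}"
    have null: "emeasure (\<mu>s k) C = 0" if k: "k \<in> {1..N} - {N}" for k
    proof (rule S_k_emeasure_eq_0)
      show "\<mu>s k \<in> S_k N \<alpha> k"
        using \<gamma> k by blast
      have "Omega_k N k \<subseteq> Omega_k N (N - 1)"
        using k by (intro Omega_k_mono) auto
      then show "C \<inter> Omega_k N k = {}"
        using C(2) by blast
    qed (fact C(1))
    then have "(\<Sum>k\<in>{1..N} - {N}. ennreal (\<gamma> k) * emeasure (\<mu>s k) C) = 0"
      by simp
    then have "emeasure \<mu> C = ennreal (\<gamma> N) * emeasure (\<mu>s N) C"
      using mixture C(1) sum.remove[OF _ N, of "\<lambda>k. ennreal (\<gamma> k) * emeasure (\<mu>s k) C"] by simp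
    also have "emeasure (\<mu>s N) C = (\<integral>\<^sup>+x. ennreal (h x) * indicator C x \<partial>pi_k N \<alpha> N)"
      unfolding \<mu>s_N using h(1) C(1)
      by (simp add: emeasure_density measurable_cong_sets[OF sets_pi_k refl])
    also have "ennreal (\<gamma> N) * \<dots> =
        (\<integral>\<^sup>+x. ennreal (\<gamma> N) * (ennreal (h x) * indicator C x) \<partial>pi_k N \<alpha> N)"
      using h(1) C(1)
      by (intro nn_integral_cmult[symmetric]) (simp add: measurable_cong_sets[OF sets_pi_k refl])
    also have "\<dots> = (\<integral>\<^sup>+x. ennreal (\<gamma> N * h x) * indicator C x \<partial>pi_k N \<alpha> N)"
      using \<gamma> N h(2) by (simp add: ennreal_mult mult.assoc)
    finally show
      "emeasure \<mu> C = (\<integral>\<^sup>+x. ennreal (\<gamma> N * h x) * indicator C x \<partial>pi_k N \<alpha> N)" .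
  qed
qed

theorem lemma6p1:
  fixes \<alpha> :: real and N :: nat and \<mu> \<nu> :: "(nat \<Rightarrow> real) measure"
  assumes "\<alpha> > 0" and "N \<ge> 2"
    and "prob_on_Omega N \<mu>" and "prob_on_Omega N \<nu>"
    and "\<mu> \<in> S_set N \<alpha>"
    and "stoch_dom N \<mu> \<nu>"
  shows "tv_dist \<mu> (pi_k N \<alpha> N) \<le> tv_dist \<nu> (pi_k N \<alpha> N)"
proof -
  let ?\<pi> = "pi_k N \<alpha> N"
  interpret \<mu>: prob_space \<mu> using assms(3) by (simp add: prob_on_Omega_def)
  interpret \<nu>: prob_space \<nu> using assms(4) by (simp add: prob_on_Omega_def)
  interpret \<pi>: subprob_space ?\<pi> by (rule subprob_space_pi_k_N)
  have sets: "sets \<mu> = sets (OmegaM N)" "sets \<nu> = sets (OmegaM N)"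
    using assms(3,4) by (simp_all add: prob_on_Omega_def)
  have space_\<pi>: "space ?\<pi> = space (OmegaM N)"
    by (rule sets_eq_imp_space_eq) simp
  obtain g where g: "g \<in> borel_measurable (OmegaM N)" "increasing_on N (Omega N) g"
    and density: "\<And>C. C \<in> sets (OmegaM N) \<Longrightarrow> C \<inter> Omega_k N (N - 1) = {} \<Longrightarrow>
      emeasure \<mu> C = (\<integral>\<^sup>+x. ennreal (g x) * indicator C x \<partial>?\<pi>)"
    using S_set_density_off_Omega_k[OF assms(2,5)] by blast
  define A where "A = Omega_k N (N - 1) \<union> {x \<in> space (OmegaM N). 1 \<le> g x}"
  have "tv_dist \<mu> ?\<pi> = measure \<mu> A - measure ?\<pi> A"
    unfolding A_def space_\<pi>[symmetric]
    using sets g(1) density null_sets_pi_k_N_Omega_k[OF assms(2)]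
      \<mu>.emeasure_space_1 \<pi>.subprob_emeasure_le_1
    by (intro tv_dist_eq_density_superlevel \<mu>.finite_measure_axioms \<pi>.finite_measure_axioms)
       (simp_all add: measurable_cong_sets[OF sets_pi_k refl])
  also have "\<dots> \<le> measure \<nu> A - measure ?\<pi> A"
    using assms(2) g(1,2) unfolding A_def
    by (intro diff_right_mono stoch_dom_measure_le[OF assms(6) sets]
        increasing_on_indicator_Omega_k_Un_superlevel) auto
  also have "\<dots> \<le> tv_dist \<nu> ?\<pi>"
    using sets g(1) unfolding A_def
    by (intro measure_diff_le_tv_dist \<nu>.finite_measure_axioms \<pi>.finite_measure_axioms) simp
  finally show ?thesis .
qed

end
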